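(* Let $(Q,\cdot)$ be a quasigroup satisfying $x(y(zz))=(x(yz))z$ for all $x,y,z\in Q$ (an LG1-quasigroup). Then $Q$ satisfies each of the following identities for all $x,y,z\in Q$: (1) $x(y(zy))=(x(yz))y$ (LG3); (2) $x(y(yz))=(x(yy))z$ (LC4); (3) $x(y(xz))=(x(yx))z$ (left Bol).
   Context: A quasigroup is a set $Q$ with a binary operation $\cdot$ (written as juxtaposition) such that for all $a,b\in Q$ each of the equations $ax=b$ and $ya=b$ has a unique solution in $Q$. *)

theory Defs
  imports Main
begin

definition quasigroup :: "'a set \<Rightarrow> ('a \<Rightarrow> 'a \<Rightarrow> 'a) \<Rightarrow> bool" where
  "quasigroup Q m \<longleftrightarrow>
     (\<forall>a\<in>Q. \<forall>b\<in>Q. m a b \<in> Q) \<and>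
     (\<forall>a\<in>Q. \<forall>b\<in>Q. \<exists>!x. x \<in> Q \<and> m a x = b) \<and>
     (\<forall>a\<in>Q. \<forall>b\<in>Q. \<exists>!y. y \<in> Q \<and> m y a = b)"

end

theory Submission
  imports Defs
begin

text \<open>Write \<open>R a\<close> for the right translation \<open>x \<mapsto> xa\<close>. LG1 says \<open>R z \<circ> R (yz) = R (y(zz))\<close>,
  and every element has the form \<open>yz\<close>, so the composite of two right translations is again
  a right translation; by cancellation it is determined by its value at a single point. Hence a
  local right unit \<open>e\<close> is global, \<open>R (ec) \<circ> R a = R (ac)\<close>, and \<open>c \<mapsto> ec\<close> is an
  involution. Together these give \<open>(x(ab))c = x(a(bc))\<close>, of which LG3, LC4 and the left Bol
  identity are instances.\<close>

locale quasigroup_on =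
  fixes Q :: "'a set" and mult :: "'a \<Rightarrow> 'a \<Rightarrow> 'a" (infixl \<open>\<cdot>\<close> 70)
  assumes quasigroup: "quasigroup Q (\<cdot>)"
begin

lemma closed [simp]: "a \<in> Q \<Longrightarrow> b \<in> Q \<Longrightarrow> a \<cdot> b \<in> Q"
  using quasigroup unfolding quasigroup_def by blast

lemma left_division: "a \<in> Q \<Longrightarrow> b \<in> Q \<Longrightarrow> \<exists>!x. x \<in> Q \<and> a \<cdot> x = b"
  using quasigroup unfolding quasigroup_def by simp

lemma right_division: "a \<in> Q \<Longrightarrow> b \<in> Q \<Longrightarrow> \<exists>!y. y \<in> Q \<and> y \<cdot> a = b"
  using quasigroup unfolding quasigroup_def by simp

lemma left_solvable:
  assumes "a \<in> Q" "b \<in> Q"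
  obtains x where "x \<in> Q" "a \<cdot> x = b"
  using left_division[OF assms] by blast

lemma right_solvable:
  assumes "a \<in> Q" "b \<in> Q"
  obtains y where "y \<in> Q" "y \<cdot> a = b"
  using right_division[OF assms] by blast

lemma left_cancel:
  assumes "a \<in> Q" "x \<in> Q" "y \<in> Q" "a \<cdot> x = a \<cdot> y"
  shows "x = y"
  using left_division[of a "a \<cdot> y"] assms by auto

lemma right_cancel:
  assumes "a \<in> Q" "x \<in> Q" "y \<in> Q" "x \<cdot> a = y \<cdot> a"
  shows "x = y"
  using right_division[of a "y \<cdot> a"] assms by auto

end

locale LG1_quasigroup = quasigroup_on +
  assumes LG1: "\<lbrakk>x \<in> Q; y \<in> Q; z \<in> Q\<rbrakk> \<Longrightarrow> x \<cdot> (y \<cdot> (z \<cdot> z)) = (x \<cdot> (y \<cdot> z)) \<cdot> z"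
begin

lemma right_translations_compose:
  assumes "a \<in> Q" "b \<in> Q"
  obtains c where "c \<in> Q" "\<And>x. x \<in> Q \<Longrightarrow> (x \<cdot> a) \<cdot> b = x \<cdot> c"
proof -
  obtain y where y: "y \<in> Q" "y \<cdot> b = a"
    using right_solvable assms by metis
  show thesis
    by (rule that[of "y \<cdot> (b \<cdot> b)"]) (use assms y LG1 in auto)
qed

lemma right_translations_compose_at:
  assumes "u \<in> Q" "a \<in> Q" "b \<in> Q" "c \<in> Q" "x \<in> Q"
    and "(u \<cdot> a) \<cdot> b = u \<cdot> c"
  shows "(x \<cdot> a) \<cdot> b = x \<cdot> c"
proof -
  obtain c' where c': "c' \<in> Q" "\<And>x. x \<in> Q \<Longrightarrow> (x \<cdot> a) \<cdot> b = x \<cdot> c'"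
    using right_translations_compose assms(2,3) by metis
  have "c' = c"
    using left_cancel[of u c' c] c' assms by simp
  with c' assms(5) show ?thesis by simp
qed

lemma local_right_unit_is_global:
  assumes "z \<in> Q" "e \<in> Q" "z \<cdot> e = z" "x \<in> Q"
  shows "x \<cdot> e = x"
proof -
  have "(x \<cdot> e) \<cdot> z = x \<cdot> z"
    using right_translations_compose_at[of z e z z x] assms by simp
  then show ?thesis
    using right_cancel[of z "x \<cdot> e" x] assms by simp
qed

lemma right_unit_exists:
  assumes "Q \<noteq> {}"
  obtains e where "e \<in> Q" "\<And>x. x \<in> Q \<Longrightarrow> x \<cdot> e = x"
proof -
  obtain z where "z \<in> Q" using assms by blast
  moreover obtain e where "e \<in> Q" "z \<cdot> e = z"
    using left_solvable \<open>z \<in> Q\<close> by metis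
  ultimately show thesis
    using that local_right_unit_is_global by blast
qed

context
  fixes e
  assumes unit_in: "e \<in> Q"
    and right_unit: "\<And>x. x \<in> Q \<Longrightarrow> x \<cdot> e = x"
begin

lemma mult_square_eq:
  assumes "x \<in> Q" "z \<in> Q" "w \<in> Q" "e \<cdot> w = z"
  shows "x \<cdot> (z \<cdot> z) = (x \<cdot> z) \<cdot> w"
proof -
  obtain y where y: "y \<in> Q" "y \<cdot> z = e"
    using right_solvable assms(2) unit_in by metis
  obtain v where v: "v \<in> Q" "e \<cdot> v = y"
    using left_solvable unit_in y(1) by metis
  have "e \<cdot> z = e \<cdot> (y \<cdot> (z \<cdot> z))"
    using LG1[of e y z] assms(2) unit_in y right_unit by simp
  then have yzz: "y \<cdot> (z \<cdot> z) = z"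
    using left_cancel[of e z "y \<cdot> (z \<cdot> z)"] unit_in assms(2) y(1) by simp
  \<comment> \<open>Both composites of right translations below need only be checked at \<open>e\<close>.\<close>
  have R_z_R_v: "(s \<cdot> v) \<cdot> z = s" if "s \<in> Q" for s
    using right_translations_compose_at[of e v z e s] that unit_in assms(2) v y right_unit by simp
  have R_zz_R_v: "(s \<cdot> v) \<cdot> (z \<cdot> z) = s \<cdot> w" if "s \<in> Q" for s
    using right_translations_compose_at[of e v "z \<cdot> z" w s] that unit_in v assms yzz by simp
  have "(x \<cdot> z) \<cdot> v = x"
    using right_cancel[of z "(x \<cdot> z) \<cdot> v" x] R_z_R_v[of "x \<cdot> z"] assms v(1) by simp
  then show ?thesis
    using R_zz_R_v[of "x \<cdot> z"] assms by simp
qed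

lemma mult_unit_right_assoc:
  assumes "x \<in> Q" "a \<in> Q" "c \<in> Q"
  shows "(x \<cdot> a) \<cdot> (e \<cdot> c) = x \<cdot> (a \<cdot> c)"
proof -
  have ec: "e \<cdot> c \<in> Q"
    using unit_in assms(3) by simp
  obtain y where y: "y \<in> Q" "y \<cdot> (e \<cdot> c) = a"
    using right_solvable ec assms(2) by metis
  have "(x \<cdot> a) \<cdot> (e \<cdot> c) = x \<cdot> (y \<cdot> ((e \<cdot> c) \<cdot> (e \<cdot> c)))"
    using LG1[of x y "e \<cdot> c"] assms(1) y ec by simp
  also have "y \<cdot> ((e \<cdot> c) \<cdot> (e \<cdot> c)) = a \<cdot> c"
    using mult_square_eq[of y "e \<cdot> c" c] y ec assms(3) by simp
  finally show ?thesis .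
qed

lemma mult_unit_involutive:
  assumes "z \<in> Q"
  shows "e \<cdot> (e \<cdot> z) = z"
proof -
  obtain w where w: "w \<in> Q" "e \<cdot> w = z"
    using left_solvable unit_in assms by metis
  have "(e \<cdot> z) \<cdot> w = (e \<cdot> z) \<cdot> (e \<cdot> z)"
    using mult_square_eq[of e z w] mult_unit_right_assoc[of e z z] unit_in assms w by simp
  then have "w = e \<cdot> z"
    using left_cancel[of "e \<cdot> z" w "e \<cdot> z"] unit_in assms w(1) by simp
  with w(2) show ?thesis by simp
qed

end

lemma nested_assoc:
  assumes "x \<in> Q" "a \<in> Q" "b \<in> Q" "c \<in> Q"
  shows "(x \<cdot> (a \<cdot> b)) \<cdot> c = x \<cdot> (a \<cdot> (b \<cdot> c))"
proof -
  obtain e where e: "e \<in> Q" "\<And>x. x \<in> Q \<Longrightarrow> x \<cdot> e = x"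
    using right_unit_exists assms(1) by blast
  note twisted_assoc = mult_unit_right_assoc[OF e] and involutive = mult_unit_involutive[OF e]
  have "(x \<cdot> (a \<cdot> b)) \<cdot> c = (x \<cdot> (a \<cdot> b)) \<cdot> (e \<cdot> (e \<cdot> c))"
    using involutive assms by simp
  also have "\<dots> = x \<cdot> ((a \<cdot> b) \<cdot> (e \<cdot> c))"
    using twisted_assoc e(1) assms by simp
  also have "\<dots> = x \<cdot> (a \<cdot> (b \<cdot> c))"
    using twisted_assoc assms by simp
  finally show ?thesis .
qed

end

theorem mainTheorem7:
  fixes Q :: "'a set" and m :: "'a \<Rightarrow> 'a \<Rightarrow> 'a"
  assumes "quasigroup Q m"
    and LG1: "\<forall>x\<in>Q. \<forall>y\<in>Q. \<forall>z\<in>Q. m x (m y (m z z)) = m (m x (m y z)) z"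
  shows "(\<forall>x\<in>Q. \<forall>y\<in>Q. \<forall>z\<in>Q. m x (m y (m z y)) = m (m x (m y z)) y)
       \<and> (\<forall>x\<in>Q. \<forall>y\<in>Q. \<forall>z\<in>Q. m x (m y (m y z)) = m (m x (m y y)) z)
       \<and> (\<forall>x\<in>Q. \<forall>y\<in>Q. \<forall>z\<in>Q. m x (m y (m x z)) = m (m x (m y x)) z)"
proof -
  interpret LG1_quasigroup Q m
    using assms by unfold_locales blast+
  show ?thesis
    using nested_assoc by simp
qed

end
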